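(* Let $r>1$ and consider $\text{EMPMO}^{\text{SP}}_{\text{cons}}$ with box parameter $r$ (as in the context). Let $P$ be the population at some generation and $P'$ the population after the next generation. Let $\mathbf{x}=(v_1,\dots,v_i)$ be a path, let $P_i$ (resp. $P_i'$) be the set of paths in $P$ (resp. $P'$) whose target vertex is $v_i$, and let $j\ge0$. If there is $\mathbf{z}\in P_i$ with $F_m(\mathbf{z})\succeq_{r^j}F_m(\mathbf{x})$ for all $m\in\{1,2\}$, then there is $\mathbf{z}'\in P_i'$ with $F_m(\mathbf{z}')\succeq_{r^{j+1}}F_m(\mathbf{x})$ for all $m\in\{1,2\}$.
   Context: Instance: directed graph $G=(V,E)$, $n=|V|$, source vertex $s$; each edge $e$ has weight vectors $w_m(e)=(w_{m1}(e),\dots,w_{mk_m}(e))$ for parties $m=1,2$, all weights $\ge1$. A path is $(v_0=s,\dots,v_l)$ with consecutive vertices joined by edges, $l\le n-1$; target $v_l$. $f_{mk}$ is the sum of the $k$-th party-$m$ weights of the edges, $F_m=(f_{m1},\dots,f_{mk_m})$, minimized. For $\rho\ge1$ and paths $\mathbf{z},\mathbf{x}$ with the same target, $F_m(\mathbf{z})\succeq_\rho F_m(\mathbf{x})$ means $f_{mk}(\mathbf{z})\le\rho f_{mk}(\mathbf{x})$ for all $k$; $F_m(\mathbf{z})\succ F_m(\mathbf{x})$ means $f_{mk}(\mathbf{z})\le f_{mk}(\mathbf{x})$ for all $k$, strict for some $k$. Box index $b_r(F_m(\mathbf{x}))=(\lfloor\log_r f_{m1}(\mathbf{x})\rfloor,\dots,\lfloor\log_r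 f_{mk_m}(\mathbf{x})\rfloor)$; $b\succeq b'$ if componentwise $\le$, $b\succ b'$ if moreover strict somewhere; paths with different targets are incomparable. Mutation: with probability $1/2$ each, Add or Delete on $(v_0,\dots,v_l)$. Add: choose $v_i$, $0\le i\le l$, uniformly; if $i<l$ and some $v'$ has $(v_i,v'),(v',v_{i+1})\in E$, insert such a $v'$; if $i=l$ and some $v'$ has $(v_l,v')\in E$, append a uniformly random such $v'$. Delete: choose $v_i$, $1\le i\le l-1$, uniformly; if $i\le l-2$ and $(v_i,v_{i+2})\in E$, remove $v_{i+1}$; if $i=l-1$, the new path is $(v_0,\dots,v_{l-1})$. $\text{EMPMO}^{\text{SP}}_{\text{cons}}$: $P\leftarrow\{(s)\}$; each generation: choose $\mathbf{x}\in P$ uniformly, mutate to get $\mathbf{x}'$; if there exists a party $m$ such that no $\mathbf{z}\in P$ with the same target as $\mathbf{x}'$ satisfies $F_m(\mathbf{z})\succ F_m(\mathbf{x}')$ or $b_r(F_m(\mathbf{z}))\succ b_r(F_m(\mathbf{x}'))$, then $P\leftarrow(P\setminus\{\mathbf{z}\in P\text{ with the same target as }\mathbf{x}':\ b_r(F_{m'}(\mathbf{x}'))\succeq b_r(F_{m'}(\mathbf{z}))\text{ for both }m'\})\cup\{\mathbf{x}'\}$. *)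

theory Defs
  imports Complex_Main "HOL-Library.Extended_Real"
begin

(* Paths are vertex lists [v0,...,vl]; parties m \<in> {1,2}; objective components k < km m.
   w m e k is the k-th party-m weight of edge e. *)

definition is_path :: "'v set \<Rightarrow> ('v \<times> 'v) set \<Rightarrow> 'v \<Rightarrow> 'v list \<Rightarrow> bool" where
  "is_path V E s xs \<longleftrightarrow> xs \<noteq> [] \<and> hd xs = s \<and> length xs \<le> card V \<and>
     (\<forall>i. Suc i < length xs \<longrightarrow> (xs ! i, xs ! Suc i) \<in> E)"

definition obj :: "(nat \<Rightarrow> 'v \<times> 'v \<Rightarrow> nat \<Rightarrow> real) \<Rightarrow> nat \<Rightarrow> nat \<Rightarrow> 'v list \<Rightarrow> real" where
  "obj w m k xs = sum_list (map (\<lambda>e. w m e k) (zip xs (tl xs)))"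

(* k-th component of the box index; log_r 0 = -\<infinity> (only the trivial path (s) has value 0) *)
definition box :: "real \<Rightarrow> (nat \<Rightarrow> 'v \<times> 'v \<Rightarrow> nat \<Rightarrow> real) \<Rightarrow> nat \<Rightarrow> nat \<Rightarrow> 'v list \<Rightarrow> ereal" where
  "box r w m k xs = (if obj w m k xs = 0 then -\<infinity>
                     else ereal (real_of_int \<lfloor>log r (obj w m k xs)\<rfloor>))"

definition dom_strict :: "(nat \<Rightarrow> nat) \<Rightarrow> (nat \<Rightarrow> 'v \<times> 'v \<Rightarrow> nat \<Rightarrow> real) \<Rightarrow> nat \<Rightarrow> 'v list \<Rightarrow> 'v list \<Rightarrow> bool" where
  "dom_strict km w m z x \<longleftrightarrow> (\<forall>k<km m. obj w m k z \<le> obj w m k x) \<and> (\<exists>k<km m. obj w m k z < obj w m k x)"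

definition box_weak :: "real \<Rightarrow> (nat \<Rightarrow> nat) \<Rightarrow> (nat \<Rightarrow> 'v \<times> 'v \<Rightarrow> nat \<Rightarrow> real) \<Rightarrow> nat \<Rightarrow> 'v list \<Rightarrow> 'v list \<Rightarrow> bool" where
  "box_weak r km w m z x \<longleftrightarrow> (\<forall>k<km m. box r w m k z \<le> box r w m k x)"

definition box_strict :: "real \<Rightarrow> (nat \<Rightarrow> nat) \<Rightarrow> (nat \<Rightarrow> 'v \<times> 'v \<Rightarrow> nat \<Rightarrow> real) \<Rightarrow> nat \<Rightarrow> 'v list \<Rightarrow> 'v list \<Rightarrow> bool" where
  "box_strict r km w m z x \<longleftrightarrow> box_weak r km w m z x \<and> (\<exists>k<km m. box r w m k z < box r w m k x)"

definition approx_dom :: "real \<Rightarrow> (nat \<Rightarrow> nat) \<Rightarrow> (nat \<Rightarrow> 'v \<times> 'v \<Rightarrow> nat \<Rightarrow> real) \<Rightarrow> nat \<Rightarrow> 'v list \<Rightarrow> 'v list \<Rightarrow> bool" where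
  "approx_dom \<rho> km w m z x \<longleftrightarrow> (\<forall>k<km m. obj w m k z \<le> \<rho> * obj w m k x)"

definition mutations :: "('v \<times> 'v) set \<Rightarrow> 'v list \<Rightarrow> 'v list set" where
  "mutations E xs =
     \<comment> \<open>Add, i < l, insertion\<close>
     {take (Suc i) xs @ [v] @ drop (Suc i) xs | i v.
        Suc i < length xs \<and> (xs ! i, v) \<in> E \<and> (v, xs ! Suc i) \<in> E}
   \<union> \<comment> \<open>Add, i = l, append\<close>
     {xs @ [v] | v. (last xs, v) \<in> E}
   \<union> \<comment> \<open>Delete, 1 \<le> i \<le> l-2\<close>
     {take (Suc i) xs @ drop (Suc (Suc i)) xs | i.
        1 \<le> i \<and> Suc (Suc i) < length xs \<and> (xs ! i, xs ! Suc (Suc i)) \<in> E}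
   \<union> \<comment> \<open>Delete, i = l-1 \<ge> 1\<close>
     {butlast xs | u::unit. 3 \<le> length xs}
   \<union> \<comment> \<open>some random choice leaves the path unchanged\<close>
     {xs | u::unit.
        (\<exists>i. Suc i < length xs \<and> \<not> (\<exists>v. (xs ! i, v) \<in> E \<and> (v, xs ! Suc i) \<in> E))
      \<or> \<not> (\<exists>v. (last xs, v) \<in> E)
      \<or> length xs \<le> 2
      \<or> (\<exists>i. 1 \<le> i \<and> Suc (Suc i) < length xs \<and> (xs ! i, xs ! Suc (Suc i)) \<notin> E)}"

definition update :: "real \<Rightarrow> (nat \<Rightarrow> nat) \<Rightarrow> (nat \<Rightarrow> 'v \<times> 'v \<Rightarrow> nat \<Rightarrow> real) \<Rightarrow> 'v list set \<Rightarrow> 'v list \<Rightarrow> 'v list set" where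
  "update r km w P x' =
     (if \<exists>m\<in>{1,2}. \<not> (\<exists>z\<in>P. last z = last x' \<and>
                          (dom_strict km w m z x' \<or> box_strict r km w m z x'))
      then (P - {z\<in>P. last z = last x' \<and> box_weak r km w 1 x' z \<and> box_weak r km w 2 x' z}) \<union> {x'}
      else P)"

definition next_gen :: "('v \<times> 'v) set \<Rightarrow> real \<Rightarrow> (nat \<Rightarrow> nat) \<Rightarrow> (nat \<Rightarrow> 'v \<times> 'v \<Rightarrow> nat \<Rightarrow> real)
                        \<Rightarrow> 'v list set \<Rightarrow> 'v list set \<Rightarrow> bool" where
  "next_gen E r km w P P' \<longleftrightarrow> (\<exists>x\<in>P. \<exists>x'\<in>mutations E x. P' = update r km w P x')"

end

(* A path z of the population either survives the next generation, or it is removed by the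
   offspring x', whose box index then weakly dominates that of z for both parties; since boxes
   span a factor r in every objective, x' approximates z within factor r. Approximation factors
   multiply, so an r^j-approximation of x in P gives an r^(j+1)-approximation in P'. The box
   comparison needs nonnegative objective values, which hold because every path of a reachable
   population is a walk along edges of positive weight. *)
theory Submission
  imports Defs
begin

abbreviation walk :: "('v \<times> 'v) set \<Rightarrow> 'v list \<Rightarrow> bool" where
  "walk E xs \<equiv> successively (\<lambda>u v. (u, v) \<in> E) xs"

lemma walk_take_drop:
  assumes "walk E xs"
  shows "walk E (take n xs)" and "walk E (drop n xs)"
  using assms successively_append_iff[of _ "take n xs" "drop n xs"] by auto

lemma walk_join:
  assumes "walk E (us @ [a])" and "walk E (a # vs)"
  shows "walk E (us @ a # vs)"
  using assms successively_append_iff[of _ us "a # vs"] successively_append_iff[of _ us "[a]"] by auto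

lemma walk_splice:
  assumes "walk E xs" and "i < n" and "n < length xs"
    and "walk E (xs ! i # ys @ [xs ! n])"
  shows "walk E (take (Suc i) xs @ ys @ drop n xs)"
proof -
  have eq: "take (Suc i) xs @ ys @ drop n xs = take i xs @ xs ! i # (ys @ [xs ! n]) @ drop (Suc n) xs"
    using assms(2,3) by (simp add: take_Suc_conv_app_nth Cons_nth_drop_Suc)
  have "walk E (take i xs @ [xs ! i])"
    using walk_take_drop(1)[OF assms(1), of "Suc i"] assms(2,3) by (simp add: take_Suc_conv_app_nth)
  moreover have "walk E (xs ! n # drop (Suc n) xs)"
    using walk_take_drop(2)[OF assms(1), of n] assms(3) by (simp add: Cons_nth_drop_Suc)
  then have "walk E ((xs ! i # ys) @ xs ! n # drop (Suc n) xs)"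
    using walk_join[of E "xs ! i # ys"] assms(4) by simp
  ultimately show ?thesis
    unfolding eq using walk_join[of E "take i xs"] by simp
qed

lemma walk_mutations:
  assumes "walk E xs" and "ys \<in> mutations E xs"
  shows "walk E ys"
  using assms(2) unfolding mutations_def
proof (elim UnE CollectE exE conjE)
  fix i v
  assume "ys = take (Suc i) xs @ [v] @ drop (Suc i) xs" and "Suc i < length xs"
    and "(xs ! i, v) \<in> E" and "(v, xs ! Suc i) \<in> E"
  then show "walk E ys"
    using walk_splice[OF assms(1), of i "Suc i" "[v]"] by simp
next
  fix v
  assume "ys = xs @ [v]" and "(last xs, v) \<in> E"
  then show "walk E ys" using assms(1) by (simp add: successively_append_iff)
next
  fix i
  assume "ys = take (Suc i) xs @ drop (Suc (Suc i)) xs" and "Suc (Suc i) < length xs"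
    and "(xs ! i, xs ! Suc (Suc i)) \<in> E"
  then show "walk E ys"
    using walk_splice[OF assms(1), of i "Suc (Suc i)" "[]"] by simp
qed (use assms(1) walk_take_drop[of E xs] in \<open>auto simp: butlast_conv_take\<close>)

lemma walk_reachable_population:
  assumes "(next_gen E r km w)\<^sup>*\<^sup>* P0 P" and "\<forall>z\<in>P0. walk E z"
  shows "\<forall>z\<in>P. walk E z"
  using assms
proof (induction rule: rtranclp_induct)
  case (step Q Q')
  then obtain x x' where "x \<in> Q" "x' \<in> mutations E x" "Q' = update r km w Q x'"
    unfolding next_gen_def by blast
  with step walk_mutations[of E x x'] show ?case unfolding update_def by auto
qed simp

lemma obj_nonneg:
  assumes "walk E xs" and "\<forall>e\<in>E. 0 \<le> w m e k"
  shows "0 \<le> obj w m k xs"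
proof -
  have "set (zip xs (tl xs)) \<subseteq> E"
    using assms(1) unfolding successively_conv_nth by (auto simp: set_zip nth_tl)
  then show ?thesis
    using assms(2) unfolding obj_def by (intro sum_list_nonneg) auto
qed

lemma box_le_imp_obj_le:
  assumes "r > 1" and "0 \<le> obj w m k z" and "0 \<le> obj w m k x"
    and "box r w m k z \<le> box r w m k x"
  shows "obj w m k z \<le> r * obj w m k x"
proof (cases "obj w m k z = 0")
  case True
  then show ?thesis using assms(1,3) by simp
next
  case False
  with assms have pos: "0 < obj w m k z" "0 < obj w m k x"
    by (auto simp: box_def split: if_splits)
  with False assms(4) have "\<lfloor>log r (obj w m k z)\<rfloor> \<le> \<lfloor>log r (obj w m k x)\<rfloor>"
    by (simp add: box_def)
  then have "log r (obj w m k z) < log r (obj w m k x) + 1" by linarith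
  also have "\<dots> = log r (r * obj w m k x)"
    using assms(1) pos by (simp add: log_mult)
  finally show ?thesis using assms(1) pos by simp
qed

lemma box_weak_imp_approx_dom:
  assumes "r > 1" and "\<forall>k<km m. 0 \<le> obj w m k z \<and> 0 \<le> obj w m k x"
    and "box_weak r km w m z x"
  shows "approx_dom r km w m z x"
  using assms box_le_imp_obj_le[of r w m _ z x]
  unfolding box_weak_def approx_dom_def by blast

lemma approx_dom_refl:
  assumes "1 \<le> \<rho>" and "\<forall>k<km m. 0 \<le> obj w m k x"
  shows "approx_dom \<rho> km w m x x"
  using assms mult_right_mono[of 1 \<rho>] unfolding approx_dom_def by fastforce

lemma approx_dom_trans:
  assumes "0 \<le> \<sigma>" and "approx_dom \<sigma> km w m y z" and "approx_dom \<rho> km w m z x"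
  shows "approx_dom (\<sigma> * \<rho>) km w m y x"
  unfolding approx_dom_def
proof (intro allI impI)
  fix k assume "k < km m"
  with assms have "obj w m k y \<le> \<sigma> * obj w m k z" "obj w m k z \<le> \<rho> * obj w m k x"
    unfolding approx_dom_def by auto
  with assms(1) show "obj w m k y \<le> \<sigma> * \<rho> * obj w m k x"
    by (metis mult.assoc mult_left_mono order_trans)
qed

lemma update_removes_only_box_dominated:
  assumes "z \<in> P" and "z \<notin> update r km w P x'"
  shows "x' \<in> update r km w P x'" and "last x' = last z"
    and "box_weak r km w 1 x' z" and "box_weak r km w 2 x' z"
  using assms unfolding update_def by (auto split: if_splits)

lemma next_gen_retains_approx_dom:
  assumes "r > 1"
    and nonneg: "\<forall>m\<in>{1,2}. \<forall>e\<in>E. \<forall>k<km m. 0 \<le> w m e k"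
    and walks: "\<forall>y\<in>P. walk E y"
    and "next_gen E r km w P P'" and "z \<in> P"
  shows "\<exists>z'\<in>P'. last z' = last z \<and> (\<forall>m\<in>{1,2}. approx_dom r km w m z' z)"
proof -
  obtain y x' where y: "y \<in> P" "x' \<in> mutations E y" and P': "P' = update r km w P x'"
    using assms(4) unfolding next_gen_def by blast
  have obj_nonneg_on: "\<forall>k<km m. 0 \<le> obj w m k u" if "walk E u" and "m \<in> {1,2}" for u m
    using obj_nonneg[OF that(1)] nonneg that(2) by blast
  have "walk E z" using walks assms(5) by blast
  show ?thesis
  proof (cases "z \<in> P'")
    case True
    have "approx_dom r km w m z z" if "m \<in> {1,2}" for m
      using approx_dom_refl[of r km m w z] obj_nonneg_on[OF \<open>walk E z\<close> that] assms(1) by simp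
    with True show ?thesis by blast
  next
    case False
    with assms(5) P' have x': "x' \<in> P'" "last x' = last z"
      and box: "\<forall>m\<in>{1,2}. box_weak r km w m x' z"
      using update_removes_only_box_dominated by auto
    have "walk E x'"
      using walk_mutations y walks by blast
    have "approx_dom r km w m x' z" if "m \<in> {1,2}" for m
      using box_weak_imp_approx_dom[OF assms(1) _ box[rule_format, OF that]]
        obj_nonneg_on[OF \<open>walk E x'\<close> that] obj_nonneg_on[OF \<open>walk E z\<close> that] by blast
    with x' show ?thesis by blast
  qed
qed

theorem lemma9:
  fixes V :: "'v set" and E :: "('v \<times> 'v) set" and s :: 'v
    and km :: "nat \<Rightarrow> nat" and w :: "nat \<Rightarrow> 'v \<times> 'v \<Rightarrow> nat \<Rightarrow> real"
    and r :: real and P P' :: "'v list set" and x :: "'v list" and j :: nat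
  assumes "finite V" and "E \<subseteq> V \<times> V" and "s \<in> V"
    and "\<forall>m\<in>{1,2}. \<forall>e\<in>E. \<forall>k<km m. w m e k \<ge> 1"
    and "r > 1"
    and "(next_gen E r km w)\<^sup>*\<^sup>* {[s]} P"
    and "next_gen E r km w P P'"
    and "is_path V E s x"
    and "\<exists>z\<in>P. last z = last x \<and> (\<forall>m\<in>{1,2}. approx_dom (r ^ j) km w m z x)"
  shows "\<exists>z'\<in>P'. last z' = last x \<and> (\<forall>m\<in>{1,2}. approx_dom (r ^ (j+1)) km w m z' x)"
proof -
  have nonneg: "\<forall>m\<in>{1,2}. \<forall>e\<in>E. \<forall>k<km m. 0 \<le> w m e k"
    using assms(4) by (meson order_trans zero_le_one)
  have walks: "\<forall>y\<in>P. walk E y"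
    using walk_reachable_population[OF assms(6)] by simp
  obtain z where z: "z \<in> P" "last z = last x" "\<forall>m\<in>{1,2}. approx_dom (r ^ j) km w m z x"
    using assms(9) by blast
  obtain z' where z': "z' \<in> P'" "last z' = last z" "\<forall>m\<in>{1,2}. approx_dom r km w m z' z"
    using next_gen_retains_approx_dom[OF assms(5) nonneg walks assms(7) z(1)] by blast
  have "approx_dom (r * r ^ j) km w m z' x" if "m \<in> {1,2}" for m
    using approx_dom_trans[of r km w m z' z "r ^ j" x] z(3) z'(3) that assms(5) by auto
  then show ?thesis
    using z z' by auto
qed

end
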